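(* Consider the control system, with state $(J_1,J_3,K_2,Q_2,J_0,Q_1,K_1,Q_3,K_3,J_2)\in\mathbb{R}^{10}$ and scalar control $g(t)$, \[ \begin{aligned} \dot J_1&=2gJ_3,\quad \dot J_3=-2gJ_1+2gK_2,\quad \dot K_2=2gJ_3+2Q_2,\quad \dot Q_2=-2K_2,\\ \dot J_0&=-2gQ_1,\quad \dot Q_1=-2gJ_0-2K_1+2gQ_3,\quad \dot K_1=2Q_1+2gK_3,\\ \dot Q_3&=-2gQ_1-2K_3,\quad \dot K_3=-2gK_1+2Q_3-2gJ_2,\quad \dot J_2=-2gK_3, \end{aligned} \] with initial state $(J_1,J_3,K_2,Q_2)=(-1,0,0,0)$, $(J_0,Q_1,K_1,Q_3,K_3,J_2)=(1,0,0,0,0,0)$. Then for every $G_0>0$ the target state $(J_1,J_3,K_2,Q_2)=(1,0,0,0)$, $(J_0,Q_1,K_1,Q_3,K_3,J_2)=(1,0,0,0,0,0)$ belongs to the reachable set of this system with controls satisfying $-G_0\le g(t)\le G_0$; that is, there exist a control $g$ with $|g(t)|\le G_0$ and a time $T>0$ such that the solution starting from the initial state is at the target state at time $T$.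
   Context: This system describes the (time-normalized) expectation values of generators of $Sp(4)$ for a cavity optomechanical system in the red-detuned regime, where $g(t)$ is the photon–phonon coupling rate in units of the mechanical frequency; the target state corresponds to a complete swap of photon and phonon populations (cooling of the mechanical resonator). *)

theory Defs
  imports "HOL-Analysis.Analysis"
begin

text \<open>State vector ordering (indices 1..10):
  (J1, J3, K2, Q2, J0, Q1, K1, Q3, K3, J2).\<close>

definition sp4_field :: "real \<Rightarrow> real^10 \<Rightarrow> real^10" where
  "sp4_field g x = vector
     [ 2*g*(x$2),
       -2*g*(x$1) + 2*g*(x$3),
       2*g*(x$2) + 2*(x$4),
       -2*(x$3),
       -2*g*(x$6),
       -2*g*(x$5) - 2*(x$7) + 2*g*(x$8),
       2*(x$6) + 2*g*(x$9),
       -2*g*(x$6) - 2*(x$9),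
       -2*g*(x$7) + 2*(x$8) - 2*g*(x$10),
       -2*g*(x$9) ]"

definition sp4_init :: "real^10" where
  "sp4_init = vector [-1, 0, 0, 0, 1, 0, 0, 0, 0, 0]"

definition sp4_target :: "real^10" where
  "sp4_target = vector [1, 0, 0, 0, 1, 0, 0, 0, 0, 0]"

definition sp4_solution :: "(real \<Rightarrow> real) \<Rightarrow> real \<Rightarrow> (real \<Rightarrow> real^10) \<Rightarrow> bool" where
  "sp4_solution g T x \<longleftrightarrow>
     x 0 = sp4_init \<and>
     (\<forall>t\<in>{0..T}. ((\<lambda>s. sp4_field (g s) (x s)) has_integral (x t - x 0)) {0..t})"

end

theory Submission imports Defs begin

text \<open>For a constant coupling \<open>g = c\<close> with \<open>\<bar>c\<bar> < 1/2\<close> the system is linear and can be solved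
in closed form: with \<open>a = sqrt (1 + 2c)\<close> and \<open>b = sqrt (1 - 2c)\<close>, the block \<open>(J1, J3, K2, Q2)\<close>
oscillates with the frequencies \<open>a \<pm> b\<close> and the block \<open>(J0, \<dots>, J2)\<close> with \<open>2a\<close> and \<open>2b\<close>.
At a time \<open>T\<close> where \<open>aT\<close> and \<open>bT\<close> are multiples of \<open>\<pi>\<close> of opposite parity, all oscillations
are back in phase except the sign of \<open>J1\<close>, so the state is exactly the target.
Choosing \<open>a : b = (N + 1) : N\<close> together with \<open>a\<^sup>2 + b\<^sup>2 = 2\<close> gives such a time, with a coupling
\<open>c < 1/N\<close> that is admissible once \<open>N > 1/G0\<close>.\<close>

lemma exhaust_10:
  fixes x :: 10
  shows "x = 1 \<or> x = 2 \<or> x = 3 \<or> x = 4 \<or> x = 5 \<or> x = 6 \<or> x = 7 \<or> x = 8 \<or> x = 9 \<or> x = 10"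
proof (induct x)
  case (of_int z)
  then have "0 \<le> z" "z < 10" by simp_all
  then have "z = 0 \<or> z = 1 \<or> z = 2 \<or> z = 3 \<or> z = 4 \<or> z = 5 \<or> z = 6 \<or> z = 7 \<or> z = 8 \<or> z = 9"
    by presburger
  then show ?case by auto
qed

lemma forall_10:
  "(\<forall>i::10. P i) \<longleftrightarrow> P 1 \<and> P 2 \<and> P 3 \<and> P 4 \<and> P 5 \<and> P 6 \<and> P 7 \<and> P 8 \<and> P 9 \<and> P 10"
  by (metis exhaust_10)

lemma has_vector_derivative_vec_componentwise:
  fixes x :: "real \<Rightarrow> real^'n"
  assumes "\<forall>i. ((\<lambda>t. x t $ i) has_real_derivative x' $ i) (at t within S)"
  shows "(x has_vector_derivative x') (at t within S)"
  unfolding has_vector_derivative_def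
proof (subst has_derivative_componentwise_within, clarsimp simp: Basis_vec_def inner_axis)
  fix i
  have "(\<lambda>h. h * x' $ i) = (*) (x' $ i)" by (rule ext) (simp add: mult.commute)
  then show "((\<lambda>t. x t $ i) has_derivative (\<lambda>h. h * x' $ i)) (at t within S)"
    using assms by (simp add: has_field_derivative_def)
qed

lemma sp4_solutionI:
  assumes "x 0 = sp4_init"
    and "\<And>t. t \<in> {0..T} \<Longrightarrow> (x has_vector_derivative sp4_field (g t) (x t)) (at t within {0..T})"
  shows "sp4_solution g T x"
  unfolding sp4_solution_def
proof (intro conjI ballI assms(1))
  fix t assume t: "t \<in> {0..T}"
  have "(x has_vector_derivative sp4_field (g s) (x s)) (at s within {0..t})" if "s \<in> {0..t}" for s
    using that t by (intro has_vector_derivative_within_subset[OF assms(2)]) auto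
  then show "((\<lambda>s. sp4_field (g s) (x s)) has_integral x t - x 0) {0..t}"
    using t by (intro fundamental_theorem_of_calculus) auto
qed

lemma sp4_field_nth:
  fixes x :: "real^10"
  shows
  "sp4_field g x $ 1 = 2*g*(x$2)"
  "sp4_field g x $ 2 = -2*g*(x$1) + 2*g*(x$3)"
  "sp4_field g x $ 3 = 2*g*(x$2) + 2*(x$4)"
  "sp4_field g x $ 4 = -2*(x$3)"
  "sp4_field g x $ 5 = -2*g*(x$6)"
  "sp4_field g x $ 6 = -2*g*(x$5) - 2*(x$7) + 2*g*(x$8)"
  "sp4_field g x $ 7 = 2*(x$6) + 2*g*(x$9)"
  "sp4_field g x $ 8 = -2*g*(x$6) - 2*(x$9)"
  "sp4_field g x $ 9 = -2*g*(x$7) + 2*(x$8) - 2*g*(x$10)"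
  "sp4_field g x $ 10 = -2*g*(x$9)"
  by (simp_all add: sp4_field_def vector_def)

definition J1_sol :: "real \<Rightarrow> real \<Rightarrow> real \<Rightarrow> real" where
  "J1_sol a b t = ((a-b)^4 * cos((a+b)*t) - (a+b)^4 * cos((a-b)*t)) / (16*a*b)"
definition J3_sol :: "real \<Rightarrow> real \<Rightarrow> real \<Rightarrow> real" where
  "J3_sol a b t = ((a+b)^3 * sin((a-b)*t) - (a-b)^3 * sin((a+b)*t)) / (8*a*b)"
definition K2_sol :: "real \<Rightarrow> real \<Rightarrow> real \<Rightarrow> real \<Rightarrow> real" where
  "K2_sol c a b t = - (c*c) * (cos((a+b)*t) - cos((a-b)*t)) / (a*b)"
definition Q2_sol :: "real \<Rightarrow> real \<Rightarrow> real \<Rightarrow> real \<Rightarrow> real" where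
  "Q2_sol c a b t = c * ((a-b) * sin((a+b)*t) - (a+b) * sin((a-b)*t)) / (2*a*b)"
definition J0_sol :: "real \<Rightarrow> real \<Rightarrow> real \<Rightarrow> real \<Rightarrow> real" where
  "J0_sol c a b t = 1 + (c*c)/(2*a*a) + (c*c)/(2*b*b)
     - (c*c)/(2*a*a) * cos(2*a*t) - (c*c)/(2*b*b) * cos(2*b*t)"
definition Q1_sol :: "real \<Rightarrow> real \<Rightarrow> real \<Rightarrow> real \<Rightarrow> real" where
  "Q1_sol c a b t = - (c/(2*a)) * sin(2*a*t) - (c/(2*b)) * sin(2*b*t)"
definition K1_sol :: "real \<Rightarrow> real \<Rightarrow> real \<Rightarrow> real \<Rightarrow> real" where
  "K1_sol c a b t = - (c*(1+c))/(2*a*a) - (c*(1-c))/(2*b*b)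
     + (c*(1+c))/(2*a*a) * cos(2*a*t) + (c*(1-c))/(2*b*b) * cos(2*b*t)"
definition Q3_sol :: "real \<Rightarrow> real \<Rightarrow> real \<Rightarrow> real \<Rightarrow> real" where
  "Q3_sol c a b t = (c*(1+c))/(2*a*a) - (c*(1-c))/(2*b*b)
     - (c*(1+c))/(2*a*a) * cos(2*a*t) + (c*(1-c))/(2*b*b) * cos(2*b*t)"
definition K3_sol :: "real \<Rightarrow> real \<Rightarrow> real \<Rightarrow> real \<Rightarrow> real" where
  "K3_sol c a b t = - (c/(2*a)) * sin(2*a*t) + (c/(2*b)) * sin(2*b*t)"
definition J2_sol :: "real \<Rightarrow> real \<Rightarrow> real \<Rightarrow> real \<Rightarrow> real" where
  "J2_sol c a b t = (c*c)/(2*a*a) - (c*c)/(2*b*b)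
     - (c*c)/(2*a*a) * cos(2*a*t) + (c*c)/(2*b*b) * cos(2*b*t)"

definition sp4_const_sol :: "real \<Rightarrow> real \<Rightarrow> real \<Rightarrow> real \<Rightarrow> real^10" where
  "sp4_const_sol c a b t = vector [J1_sol a b t, J3_sol a b t, K2_sol c a b t, Q2_sol c a b t,
     J0_sol c a b t, Q1_sol c a b t, K1_sol c a b t, Q3_sol c a b t, K3_sol c a b t, J2_sol c a b t]"

lemma sp4_const_sol_nth:
  "sp4_const_sol c a b t $ 1 = J1_sol a b t" "sp4_const_sol c a b t $ 2 = J3_sol a b t"
  "sp4_const_sol c a b t $ 3 = K2_sol c a b t" "sp4_const_sol c a b t $ 4 = Q2_sol c a b t"
  "sp4_const_sol c a b t $ 5 = J0_sol c a b t" "sp4_const_sol c a b t $ 6 = Q1_sol c a b t"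
  "sp4_const_sol c a b t $ 7 = K1_sol c a b t" "sp4_const_sol c a b t $ 8 = Q3_sol c a b t"
  "sp4_const_sol c a b t $ 9 = K3_sol c a b t" "sp4_const_sol c a b t $ 10 = J2_sol c a b t"
  by (simp_all add: sp4_const_sol_def vector_def)

context
  fixes a b c :: real
  assumes a: "a > 0" and b: "b > 0" and ha: "a^2 = 1 + 2*c" and hb: "b^2 = 1 - 2*c"
begin

lemma J1_sol_deriv: "(J1_sol a b has_real_derivative 2*c*J3_sol a b t) (at t)"
proof (rule DERIV_cong)
  show "(J1_sol a b has_real_derivative
      ((a+b)^4*(a-b) * sin((a-b)*t) - (a-b)^4*(a+b) * sin((a+b)*t))/(16*a*b)) (at t)"
    unfolding J1_sol_def using a b by (auto intro!: derivative_eq_intros simp: field_simps)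
  show "((a+b)^4*(a-b) * sin((a-b)*t) - (a-b)^4*(a+b) * sin((a+b)*t))/(16*a*b) = 2*c*J3_sol a b t"
    unfolding J3_sol_def using a b ha hb by (simp add: divide_simps) algebra
qed

lemma J3_sol_deriv: "(J3_sol a b has_real_derivative -2*c*J1_sol a b t + 2*c*K2_sol c a b t) (at t)"
proof (rule DERIV_cong)
  show "(J3_sol a b has_real_derivative
      ((a+b)^3*(a-b) * cos((a-b)*t) - (a-b)^3*(a+b) * cos((a+b)*t))/(8*a*b)) (at t)"
    unfolding J3_sol_def using a b by (auto intro!: derivative_eq_intros simp: field_simps)
  show "((a+b)^3*(a-b) * cos((a-b)*t) - (a-b)^3*(a+b) * cos((a+b)*t))/(8*a*b)
      = -2*c*J1_sol a b t + 2*c*K2_sol c a b t"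
    unfolding J1_sol_def K2_sol_def using a b ha hb by (simp add: divide_simps) algebra
qed

lemma K2_sol_deriv: "(K2_sol c a b has_real_derivative 2*c*J3_sol a b t + 2*Q2_sol c a b t) (at t)"
proof (rule DERIV_cong)
  show "(K2_sol c a b has_real_derivative
      (c*c) * ((a+b) * sin((a+b)*t) - (a-b) * sin((a-b)*t))/(a*b)) (at t)"
    unfolding K2_sol_def using a b by (auto intro!: derivative_eq_intros simp: field_simps)
  show "(c*c) * ((a+b) * sin((a+b)*t) - (a-b) * sin((a-b)*t))/(a*b)
      = 2*c*J3_sol a b t + 2*Q2_sol c a b t"
    unfolding J3_sol_def Q2_sol_def using a b ha hb by (simp add: divide_simps) algebra
qed

lemma Q2_sol_deriv: "(Q2_sol c a b has_real_derivative -2*K2_sol c a b t) (at t)"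
proof (rule DERIV_cong)
  show "(Q2_sol c a b has_real_derivative
      c * ((a-b)*(a+b) * cos((a+b)*t) - (a+b)*(a-b) * cos((a-b)*t))/(2*a*b)) (at t)"
    unfolding Q2_sol_def using a b by (auto intro!: derivative_eq_intros simp: field_simps)
  show "c * ((a-b)*(a+b) * cos((a+b)*t) - (a+b)*(a-b) * cos((a-b)*t))/(2*a*b) = -2*K2_sol c a b t"
    unfolding K2_sol_def using a b ha hb by (simp add: divide_simps) algebra
qed

lemma J0_sol_deriv: "(J0_sol c a b has_real_derivative -2*c*Q1_sol c a b t) (at t)"
proof (rule DERIV_cong)
  show "(J0_sol c a b has_real_derivative (c*c)/a * sin(2*a*t) + (c*c)/b * sin(2*b*t)) (at t)"
    unfolding J0_sol_def using a b by (auto intro!: derivative_eq_intros simp: field_simps)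
  show "(c*c)/a * sin(2*a*t) + (c*c)/b * sin(2*b*t) = -2*c*Q1_sol c a b t"
    unfolding Q1_sol_def using a b by (simp add: divide_simps) (simp add: algebra_simps)
qed

lemma Q1_sol_deriv:
  "(Q1_sol c a b has_real_derivative -2*c*J0_sol c a b t - 2*K1_sol c a b t + 2*c*Q3_sol c a b t) (at t)"
proof (rule DERIV_cong)
  show "(Q1_sol c a b has_real_derivative - c * cos(2*a*t) - c * cos(2*b*t)) (at t)"
    unfolding Q1_sol_def using a b by (auto intro!: derivative_eq_intros simp: field_simps)
  show "- c * cos(2*a*t) - c * cos(2*b*t) = -2*c*J0_sol c a b t - 2*K1_sol c a b t + 2*c*Q3_sol c a b t"
    unfolding J0_sol_def K1_sol_def Q3_sol_def using a b ha hb by (simp add: divide_simps) algebra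
qed

lemma K1_sol_deriv: "(K1_sol c a b has_real_derivative 2*Q1_sol c a b t + 2*c*K3_sol c a b t) (at t)"
proof (rule DERIV_cong)
  show "(K1_sol c a b has_real_derivative
      - (c*(1+c))/a * sin(2*a*t) - (c*(1-c))/b * sin(2*b*t)) (at t)"
    unfolding K1_sol_def using a b by (auto intro!: derivative_eq_intros simp: field_simps)
  show "- (c*(1+c))/a * sin(2*a*t) - (c*(1-c))/b * sin(2*b*t) = 2*Q1_sol c a b t + 2*c*K3_sol c a b t"
    unfolding Q1_sol_def K3_sol_def using a b by (simp add: divide_simps) (simp add: algebra_simps)
qed

lemma Q3_sol_deriv: "(Q3_sol c a b has_real_derivative -2*c*Q1_sol c a b t - 2*K3_sol c a b t) (at t)"
proof (rule DERIV_cong)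
  show "(Q3_sol c a b has_real_derivative
      (c*(1+c))/a * sin(2*a*t) - (c*(1-c))/b * sin(2*b*t)) (at t)"
    unfolding Q3_sol_def using a b by (auto intro!: derivative_eq_intros simp: field_simps)
  show "(c*(1+c))/a * sin(2*a*t) - (c*(1-c))/b * sin(2*b*t) = -2*c*Q1_sol c a b t - 2*K3_sol c a b t"
    unfolding Q1_sol_def K3_sol_def using a b by (simp add: divide_simps) (simp add: algebra_simps)
qed

lemma K3_sol_deriv:
  "(K3_sol c a b has_real_derivative -2*c*K1_sol c a b t + 2*Q3_sol c a b t - 2*c*J2_sol c a b t) (at t)"
proof (rule DERIV_cong)
  show "(K3_sol c a b has_real_derivative - c * cos(2*a*t) + c * cos(2*b*t)) (at t)"
    unfolding K3_sol_def using a b by (auto intro!: derivative_eq_intros simp: field_simps)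
  show "- c * cos(2*a*t) + c * cos(2*b*t) = -2*c*K1_sol c a b t + 2*Q3_sol c a b t - 2*c*J2_sol c a b t"
    unfolding K1_sol_def Q3_sol_def J2_sol_def using a b ha hb by (simp add: divide_simps) algebra
qed

lemma J2_sol_deriv: "(J2_sol c a b has_real_derivative -2*c*K3_sol c a b t) (at t)"
proof (rule DERIV_cong)
  show "(J2_sol c a b has_real_derivative (c*c)/a * sin(2*a*t) - (c*c)/b * sin(2*b*t)) (at t)"
    unfolding J2_sol_def using a b by (auto intro!: derivative_eq_intros simp: field_simps)
  show "(c*c)/a * sin(2*a*t) - (c*c)/b * sin(2*b*t) = -2*c*K3_sol c a b t"
    unfolding K3_sol_def using a b by (simp add: divide_simps) (simp add: algebra_simps)
qed

lemma sp4_const_sol_deriv: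
  "(sp4_const_sol c a b has_vector_derivative sp4_field c (sp4_const_sol c a b t)) (at t within S)"
  by (rule has_vector_derivative_vec_componentwise, unfold forall_10 sp4_const_sol_nth sp4_field_nth)
    (intro conjI has_field_derivative_at_within[OF J1_sol_deriv] has_field_derivative_at_within[OF J3_sol_deriv]
      has_field_derivative_at_within[OF K2_sol_deriv] has_field_derivative_at_within[OF Q2_sol_deriv]
      has_field_derivative_at_within[OF J0_sol_deriv] has_field_derivative_at_within[OF Q1_sol_deriv]
      has_field_derivative_at_within[OF K1_sol_deriv] has_field_derivative_at_within[OF Q3_sol_deriv]
      has_field_derivative_at_within[OF K3_sol_deriv] has_field_derivative_at_within[OF J2_sol_deriv])

lemma sp4_const_sol_solution: "sp4_solution (\<lambda>_. c) T (sp4_const_sol c a b)"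
proof (rule sp4_solutionI[OF _ sp4_const_sol_deriv])
  have "J1_sol a b 0 = -1"
    unfolding J1_sol_def using a b ha hb by (simp add: divide_simps) algebra
  then show "sp4_const_sol c a b 0 = sp4_init"
    by (simp add: sp4_const_sol_def sp4_init_def J3_sol_def K2_sol_def Q2_sol_def J0_sol_def
        Q1_sol_def K1_sol_def Q3_sol_def K3_sol_def J2_sol_def)
qed

lemma sp4_const_sol_eq_target:
  assumes aT: "a*T = real m * pi" and bT: "b*T = real n * pi" and "odd (m + n)"
  shows "sp4_const_sol c a b T = sp4_target"
proof -
  have sa: "sin (a*T) = 0" and sb: "sin (b*T) = 0" and "cos (a*T) * cos (b*T) = -1"
    using assms by (simp_all add: power_add[symmetric])
  then have trig: "cos((a+b)*T) = -1" "cos((a-b)*T) = -1" "sin((a+b)*T) = 0" "sin((a-b)*T) = 0"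
      "cos(2*a*T) = 1" "cos(2*b*T) = 1" "sin(2*a*T) = 0" "sin(2*b*T) = 0"
    using sin_cos_squared_add[of "a*T"] sin_cos_squared_add[of "b*T"]
    by (simp_all add: distrib_right left_diff_distrib cos_add sin_add cos_diff sin_diff
        mult.assoc cos_double sin_double)
  have "J1_sol a b T = 1"
    unfolding J1_sol_def using a b ha hb trig by (simp add: divide_simps) algebra
  then show ?thesis
    using trig by (simp add: sp4_const_sol_def sp4_target_def J3_sol_def K2_sol_def Q2_sol_def
        J0_sol_def Q1_sol_def K1_sol_def Q3_sol_def K3_sol_def J2_sol_def)
qed

end

lemma sp4_target_reachable_by_constant_control:
  fixes N :: nat
  assumes "N > 0"
  defines "c \<equiv> (2 * real N + 1) / (2 * (2 * real N ^ 2 + 2 * real N + 1))"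
  shows "\<exists>T x. T > 0 \<and> sp4_solution (\<lambda>_. c) T x \<and> x T = sp4_target"
proof -
  define D where "D = 2 * real N ^ 2 + 2 * real N + 1"
  define s where "s = sqrt (2 / D)"
  define a where "a = real (N + 1) * s"
  define b where "b = real N * s"
  have D: "D > 0" unfolding D_def by (simp add: add_nonneg_pos)
  have s: "s > 0" and s2: "s^2 = 2 / D" unfolding s_def using D by simp_all
  have a: "a > 0" and b: "b > 0" unfolding a_def b_def using s assms by simp_all
  have "a^2 = 2 * real (N + 1)^2 / D" "b^2 = 2 * real N ^ 2 / D"
    unfolding a_def b_def by (simp_all add: power_mult_distrib s2)
  then have ha: "a^2 = 1 + 2*c" and hb: "b^2 = 1 - 2*c"
    unfolding c_def D_def[symmetric] using D
    by (simp_all add: divide_simps) (simp_all add: D_def power2_eq_square algebra_simps)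
  have T: "a * (pi / s) = real (N + 1) * pi" "b * (pi / s) = real N * pi"
    unfolding a_def b_def using s by simp_all
  have "sp4_const_sol c a b (pi / s) = sp4_target"
    by (rule sp4_const_sol_eq_target[OF a b ha hb T]) simp
  then show ?thesis
    using s sp4_const_sol_solution[OF a b ha hb]
    by (intro exI[of _ "pi / s"] exI[of _ "sp4_const_sol c a b"]) auto
qed

theorem theorem1:
  fixes G0 :: real
  assumes "G0 > 0"
  shows "\<exists>g T x. T > 0 \<and> g \<in> borel_measurable lborel \<and>
           (\<forall>t\<in>{0..T}. \<bar>g t\<bar> \<le> G0) \<and>
           sp4_solution g T x \<and> x T = sp4_target"
proof -
  obtain N :: nat where N: "1 / G0 < real N" using reals_Archimedean2 by blast
  then have "N > 0" using assms by (metis divide_pos_pos gr0I of_nat_0 order_less_asym zero_less_one)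
  define c where "c = (2 * real N + 1) / (2 * (2 * real N ^ 2 + 2 * real N + 1))"
  have D: "2 * real N ^ 2 + 2 * real N + 1 > 0" by (simp add: add_nonneg_pos)
  then have "0 \<le> c" unfolding c_def by simp
  moreover have "c \<le> 1 / real N"
    unfolding c_def using \<open>N > 0\<close> D by (simp add: divide_simps power2_eq_square algebra_simps)
  moreover have "1 / real N < G0" using N assms \<open>N > 0\<close> by (simp add: field_simps)
  moreover obtain T x where "T > 0" "sp4_solution (\<lambda>_. c) T x" "x T = sp4_target"
    using sp4_target_reachable_by_constant_control[OF \<open>N > 0\<close>] unfolding c_def by blast
  ultimately show ?thesis by (intro exI[of _ "\<lambda>_. c"] exI[of _ T] exI[of _ x]) auto
qed

end
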